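(* Let $H$ be a $4$-tournament on $7$ vertices and let $C=v_1b_1v_2\dots v_7b_7v_1$ be a Hamiltonian cycle of $H$. Then any two different pairs of vertices, each consisting of two vertices that are not consecutive on $C$, are simultaneously contained in at most four of the hyperarcs $b_1,\dots,b_7$.
   Context: For $2\le k\le n$, a $k$-tournament $H$ on $n$ vertices is a pair $(V,A)$ where $V$ is a set of $n$ vertices and $A$ is a set of $k$-tuples of distinct vertices (hyperarcs) such that for every $k$-subset $S\subseteq V$, $A$ contains exactly one of the $k!$ orderings of $S$. For a hyperarc $a=(x_1\dots x_k)$, $x_i$ precedes $x_j$ if $i<j$. A Hamiltonian cycle is an alternating sequence $v_1b_1v_2\dots v_nb_nv_1$ of all $n$ distinct vertices and $n$ distinct hyperarcs such that $v_i$ precedes $v_{i+1}$ in $b_i$ (indices mod $n$). Two vertices are consecutive on $C$ if they are $v_i,v_{i+1}$ for some $i$ (mod $7$). A pair is contained in a hyperarc if both its vertices belong to the vertex set of the hyperarc. *)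

theory Defs
  imports Main
begin

definition k_tournament :: "nat \<Rightarrow> 'a set \<Rightarrow> 'a list set \<Rightarrow> bool" where
  "k_tournament k V A \<longleftrightarrow>
     finite V \<and> 2 \<le> k \<and> k \<le> card V \<and>
     (\<forall>a\<in>A. distinct a \<and> length a = k \<and> set a \<subseteq> V) \<and>
     (\<forall>S. S \<subseteq> V \<and> card S = k \<longrightarrow> (\<exists>!a. a \<in> A \<and> set a = S))"

definition precedes :: "'a \<Rightarrow> 'a \<Rightarrow> 'a list \<Rightarrow> bool" where
  "precedes x y a \<longleftrightarrow> (\<exists>i j. i < j \<and> j < length a \<and> a ! i = x \<and> a ! j = y)"

text \<open>Hamiltonian cycle v_0 b_0 v_1 ... v_{n-1} b_{n-1} v_0 (indices 0-based, mod n).\<close>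

definition ham_cycle :: "'a set \<Rightarrow> 'a list set \<Rightarrow> (nat \<Rightarrow> 'a) \<Rightarrow> (nat \<Rightarrow> 'a list) \<Rightarrow> bool" where
  "ham_cycle V A v b \<longleftrightarrow>
     (let n = card V in
       bij_betw v {..<n} V \<and> inj_on b {..<n} \<and> b ` {..<n} \<subseteq> A \<and>
       (\<forall>i<n. precedes (v i) (v (Suc i mod n)) (b i)))"

definition consecutive :: "nat \<Rightarrow> (nat \<Rightarrow> 'a) \<Rightarrow> 'a \<Rightarrow> 'a \<Rightarrow> bool" where
  "consecutive n v x y \<longleftrightarrow> (\<exists>i<n. (x = v i \<and> y = v (Suc i mod n)) \<or> (y = v i \<and> x = v (Suc i mod n)))"

end

theory Submission
  imports Defs
begin

text \<open>The arcs of a Hamiltonian cycle are distinct hyperarcs, and distinct hyperarcs of a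
tournament have distinct vertex sets. Two different pairs of vertices span a set \<open>T\<close> of three
or four vertices, and a 4-subset of the 7 vertices containing \<open>T\<close> is determined by at most one
further vertex out of the remaining four, so at most four arcs of the cycle contain \<open>T\<close>.\<close>

lemma card_supersets_of_card:
  assumes "finite V" and "T \<subseteq> V" and "card T \<le> k"
  shows "card {S. S \<subseteq> V \<and> T \<subseteq> S \<and> card S = k} = (card V - card T) choose (k - card T)"
proof -
  have finT: "finite T" using assms(1,2) finite_subset by blast
  have "bij_betw (\<lambda>S. S - T) {S. S \<subseteq> V \<and> T \<subseteq> S \<and> card S = k}
          {U. U \<subseteq> V - T \<and> card U = k - card T}"
  proof (rule bij_betw_byWitness[where f' = "\<lambda>U. U \<union> T"])
    show "\<forall>S\<in>{S. S \<subseteq> V \<and> T \<subseteq> S \<and> card S = k}. S - T \<union> T = S" by blast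
    show "\<forall>U\<in>{U. U \<subseteq> V - T \<and> card U = k - card T}. U \<union> T - T = U" by blast
    show "(\<lambda>S. S - T) ` {S. S \<subseteq> V \<and> T \<subseteq> S \<and> card S = k}
            \<subseteq> {U. U \<subseteq> V - T \<and> card U = k - card T}"
      using finT by (auto simp: card_Diff_subset)
    show "(\<lambda>U. U \<union> T) ` {U. U \<subseteq> V - T \<and> card U = k - card T}
            \<subseteq> {S. S \<subseteq> V \<and> T \<subseteq> S \<and> card S = k}"
    proof clarify
      fix U assume U: "U \<subseteq> V - T" "card U = k - card T"
      then have "finite U" using assms(1) finite_subset by blast
      then have "card (U \<union> T) = card U + card T"
        using U(1) finT by (subst card_Un_disjoint) auto
      then show "U \<union> T \<subseteq> V \<and> T \<subseteq> U \<union> T \<and> card (U \<union> T) = k"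
        using U assms(2,3) by auto
    qed
  qed
  then have "card {S. S \<subseteq> V \<and> T \<subseteq> S \<and> card S = k}
               = card {U. U \<subseteq> V - T \<and> card U = k - card T}"
    by (rule bij_betw_same_card)
  also have "\<dots> = (card V - card T) choose (k - card T)"
    using assms(1,2) finT by (simp add: n_subsets card_Diff_subset)
  finally show ?thesis .
qed

lemma k_tournament_inj_on_set:
  assumes "k_tournament k V A"
  shows "inj_on set A"
proof (rule inj_onI)
  fix a a' assume a: "a \<in> A" and a': "a' \<in> A" and eq: "set a = set a'"
  have "distinct a" "length a = k" "set a \<subseteq> V"
    using a assms unfolding k_tournament_def by auto
  then have "set a \<subseteq> V \<and> card (set a) = k" by (simp add: distinct_card)
  then have "\<exists>!c. c \<in> A \<and> set c = set a"
    using assms unfolding k_tournament_def by blast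
  then show "a = a'" using a a' eq by blast
qed

lemma ham_cycle_inj_on_arc_sets:
  assumes "k_tournament k V A" and "ham_cycle V A v b"
  shows "inj_on (\<lambda>i. set (b i)) {..<card V}"
proof -
  have "inj_on b {..<card V}" and "b ` {..<card V} \<subseteq> A"
    using assms(2) unfolding ham_cycle_def Let_def by simp_all
  then have "inj_on (set \<circ> b) {..<card V}"
    by (intro comp_inj_on inj_on_subset[OF k_tournament_inj_on_set[OF assms(1)]])
  then show ?thesis by (simp add: comp_def)
qed

lemma ham_cycle_card_arcs_containing:
  assumes "k_tournament k V A" and "ham_cycle V A v b"
    and "T \<subseteq> V" and "card T \<le> k"
  shows "card {i. i < card V \<and> T \<subseteq> set (b i)} \<le> (card V - card T) choose (k - card T)"
proof -
  let ?I = "{i. i < card V \<and> T \<subseteq> set (b i)}"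
  let ?F = "{S. S \<subseteq> V \<and> T \<subseteq> S \<and> card S = k}"
  have finV: "finite V" using assms(1) unfolding k_tournament_def by simp
  have "inj_on (\<lambda>i. set (b i)) ?I"
    using ham_cycle_inj_on_arc_sets[OF assms(1,2)] by (rule inj_on_subset) auto
  moreover have "(\<lambda>i. set (b i)) ` ?I \<subseteq> ?F"
  proof (rule image_subsetI)
    fix i assume i: "i \<in> ?I"
    then have "b i \<in> A"
      using assms(2) unfolding ham_cycle_def Let_def by auto
    then have "distinct (b i)" "length (b i) = k" "set (b i) \<subseteq> V"
      using assms(1) unfolding k_tournament_def by auto
    then show "set (b i) \<in> ?F" using i by (simp add: distinct_card)
  qed
  moreover have "finite ?F" using finV by (auto intro: finite_subset[of _ "Pow V"])
  ultimately have "card ?I \<le> card ?F" by (rule card_inj_on_le)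
  also have "\<dots> = (card V - card T) choose (k - card T)"
    using card_supersets_of_card[OF finV assms(3,4)] .
  finally show ?thesis .
qed

lemma card_union_of_distinct_pairs:
  assumes "x \<noteq> y" and "z \<noteq> w" and "{x, y} \<noteq> {z, w}"
  shows "3 \<le> card {x, y, z, w}" and "card {x, y, z, w} \<le> 4"
proof -
  show "card {x, y, z, w} \<le> 4"
    using card_length[of "[x, y, z, w]"] by simp
  obtain u where u: "u \<in> {z, w}" "u \<notin> {x, y}" using assms by auto
  then have "card {x, y, u} = 3" using assms(1) by (auto simp: card_insert_if)
  moreover have "{x, y, u} \<subseteq> {x, y, z, w}" using u(1) by auto
  ultimately show "3 \<le> card {x, y, z, w}" by (metis card_mono finite.emptyI finite_insert)
qed

theorem lemma3:
  fixes V :: "'a set" and A :: "'a list set" and v :: "nat \<Rightarrow> 'a" and b :: "nat \<Rightarrow> 'a list"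
    and x y z w :: 'a
  assumes "k_tournament 4 V A" and "card V = 7"
    and "ham_cycle V A v b"
    and "x \<in> V" "y \<in> V" "z \<in> V" "w \<in> V" "x \<noteq> y" "z \<noteq> w"
    and "{x, y} \<noteq> {z, w}"
    and "\<not> consecutive 7 v x y" and "\<not> consecutive 7 v z w"
  shows "card {i. i < 7 \<and> {x, y, z, w} \<subseteq> set (b i)} \<le> 4"
proof -
  let ?T = "{x, y, z, w}"
  have T_bounds: "3 \<le> card ?T" "card ?T \<le> 4"
    using card_union_of_distinct_pairs[OF assms(8-10)] by simp_all
  have "card ?T = 3 \<or> card ?T = 4"
    using T_bounds by linarith
  then have "(7 - card ?T) choose (4 - card ?T) \<le> 4"
    by (auto simp: numeral_eq_Suc)
  moreover have "card {i. i < 7 \<and> ?T \<subseteq> set (b i)} \<le> (7 - card ?T) choose (4 - card ?T)"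
    using ham_cycle_card_arcs_containing[OF assms(1,3), of ?T] assms(2,4-7) T_bounds(2)
    by simp
  ultimately show ?thesis by linarith
qed

end
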